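(* Let $H$ be a finite simple graph on $n\ge 2$ vertices and $G=w(H)$. Let $f_i$ denote the number of $i$-dimensional faces of $\operatorname{Ind}(G)$. Then $f_{n-2}\ge f_{n-1}$.
   Context: For a graph $H$ with vertex set $\{x_1,\dots,x_n\}$, the whiskered graph $w(H)$ has vertex set $\{x_1,\dots,x_n,y_1,\dots,y_n\}$ and edge set $E(H)\cup\{\{x_i,y_i\}: i=1,\dots,n\}$. The independence complex $\operatorname{Ind}(G)$ is the simplicial complex whose faces are the independent sets of $G$ (sets containing no edge); a face $F$ has dimension $|F|-1$. *)

theory Defs
  imports Main
begin

definition simple_graph :: "'a set \<Rightarrow> ('a \<Rightarrow> 'a \<Rightarrow> bool) \<Rightarrow> bool" where
  "simple_graph V E \<longleftrightarrow> finite V \<and> (\<forall>x y. E x y \<longrightarrow> x \<in> V \<and> y \<in> V)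
     \<and> (\<forall>x y. E x y \<longrightarrow> E y x) \<and> (\<forall>x. \<not> E x x)"

(* Whiskered graph w(H): vertices x_i = Inl i and whiskers y_i = Inr i. *)
definition whisker_verts :: "'a set \<Rightarrow> ('a + 'a) set" where
  "whisker_verts V = Inl ` V \<union> Inr ` V"

fun whisker_edge :: "'a set \<Rightarrow> ('a \<Rightarrow> 'a \<Rightarrow> bool) \<Rightarrow> ('a + 'a) \<Rightarrow> ('a + 'a) \<Rightarrow> bool" where
  "whisker_edge V E (Inl x) (Inl y) = E x y"
| "whisker_edge V E (Inl x) (Inr y) = (x = y \<and> x \<in> V)"
| "whisker_edge V E (Inr x) (Inl y) = (x = y \<and> x \<in> V)"
| "whisker_edge V E (Inr x) (Inr y) = False"

definition independence_complex :: "'v set \<Rightarrow> ('v \<Rightarrow> 'v \<Rightarrow> bool) \<Rightarrow> 'v set set" where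
  "independence_complex W R = {F. F \<subseteq> W \<and> (\<forall>u\<in>F. \<forall>v\<in>F. \<not> R u v)}"

definition f_vec :: "'v set set \<Rightarrow> nat \<Rightarrow> nat" where
  "f_vec K i = card {F \<in> K. card F = i + 1}"

end

theory Submission
  imports Defs
begin

text \<open>The top-dimensional faces of \<open>Ind(w(H))\<close> are exactly the sets
  \<open>{x\<^sub>i | i \<in> S} \<union> {y\<^sub>i | i \<notin> S}\<close> with \<open>S\<close> independent in \<open>H\<close>, so \<open>f\<^bsub>n-1\<^esub>\<close> is at most the number of
  independent sets of \<open>H\<close>. Deleting one whisker vertex \<open>y\<^sub>i\<close> from such a facet gives a face of
  dimension \<open>n - 2\<close> from which both \<open>i\<close> and \<open>S\<close> can be read off; fixing two vertices \<open>u \<noteq> v\<close> and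
  choosing \<open>i\<close> suitably (or shrinking \<open>S\<close>) whenever \<open>y\<^sub>u\<close> is unavailable turns this into an
  injection from the independent sets of \<open>H\<close> into the \<open>(n - 2)\<close>-faces.\<close>

definition whisker_facet :: "'a set \<Rightarrow> 'a set \<Rightarrow> ('a + 'a) set" where
  "whisker_facet V S = Inl ` S \<union> Inr ` (V - S)"

lemma finite_independence_complex:
  "finite W \<Longrightarrow> finite (independence_complex W R)"
  unfolding independence_complex_def by simp

lemma independence_complex_subset_closed:
  "F \<in> independence_complex W R \<Longrightarrow> G \<subseteq> F \<Longrightarrow> G \<in> independence_complex W R"
  unfolding independence_complex_def by blast

lemma sum_set_eq_Inl_Inr_parts:
  "F = Inl ` {x. Inl x \<in> F} \<union> Inr ` {x. Inr x \<in> F}"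
  by (auto intro: sum.exhaust)

lemma card_Inl_Un_Inr:
  assumes "finite S" "finite T"
  shows "card (Inl ` S \<union> Inr ` T) = card S + card T"
  using assms by (subst card_Un_disjoint) (auto simp: card_image)

lemma card_whisker_facet:
  assumes "finite V" "S \<subseteq> V"
  shows "card (whisker_facet V S) = card V"
  using assms card_Inl_Un_Inr[of S "V - S"]
  by (simp add: whisker_facet_def card_Diff_subset finite_subset card_mono)

lemma whisker_facet_in_independence_complex:
  assumes "S \<in> independence_complex V E"
  shows "whisker_facet V S \<in> independence_complex (whisker_verts V) (whisker_edge V E)"
proof -
  have "\<not> whisker_edge V E a b" if "a \<in> whisker_facet V S" "b \<in> whisker_facet V S" for a b
    using assms that unfolding whisker_facet_def independence_complex_def
    by (cases a; cases b) auto
  moreover have "whisker_facet V S \<subseteq> whisker_verts V"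
    using assms unfolding whisker_facet_def whisker_verts_def independence_complex_def by auto
  ultimately show ?thesis
    unfolding independence_complex_def by blast
qed

lemma whisker_top_face_is_facet:
  assumes "finite V"
    and F: "F \<in> independence_complex (whisker_verts V) (whisker_edge V E)"
    and card_F: "card F = card V"
  obtains S where "S \<in> independence_complex V E" "F = whisker_facet V S"
proof -
  define S where "S = {x. Inl x \<in> F}"
  define R where "R = {x. Inr x \<in> F}"
  have F_eq: "F = Inl ` S \<union> Inr ` R"
    unfolding S_def R_def by (rule sum_set_eq_Inl_Inr_parts)
  have "F \<subseteq> whisker_verts V" and indep: "\<forall>a\<in>F. \<forall>b\<in>F. \<not> whisker_edge V E a b"
    using F unfolding independence_complex_def by auto
  then have "S \<subseteq> V" "R \<subseteq> V"
    unfolding S_def R_def whisker_verts_def by auto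
  have "S \<inter> R = {}"
  proof (intro equals0I)
    fix x assume "x \<in> S \<inter> R"
    then have "Inl x \<in> F" "Inr x \<in> F" "x \<in> V"
      using \<open>S \<subseteq> V\<close> unfolding S_def R_def by auto
    with indep show False
      by (metis whisker_edge.simps(2))
  qed
  have "card (S \<union> R) = card V"
    using card_F \<open>S \<inter> R = {}\<close> \<open>S \<subseteq> V\<close> \<open>R \<subseteq> V\<close> \<open>finite V\<close>
    by (simp add: F_eq card_Inl_Un_Inr card_Un_disjoint finite_subset)
  then have "S \<union> R = V"
    using \<open>S \<subseteq> V\<close> \<open>R \<subseteq> V\<close> \<open>finite V\<close> by (intro card_subset_eq) auto
  with \<open>S \<inter> R = {}\<close> have "R = V - S"
    by blast
  then have "F = whisker_facet V S"
    unfolding F_eq whisker_facet_def by simp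
  moreover have "S \<in> independence_complex V E"
    using indep \<open>S \<subseteq> V\<close> unfolding S_def independence_complex_def by force
  ultimately show ?thesis
    using that by blast
qed

lemma card_whisker_top_faces_le:
  assumes "finite V" "V \<noteq> {}"
  shows "f_vec (independence_complex (whisker_verts V) (whisker_edge V E)) (card V - 1)
       \<le> card (independence_complex V E)"
proof -
  have "card V - 1 + 1 = card V"
    using assms by (simp add: card_gt_0_iff)
  then have "{F \<in> independence_complex (whisker_verts V) (whisker_edge V E). card F = card V - 1 + 1}
      \<subseteq> whisker_facet V ` independence_complex V E"
    by (auto elim: whisker_top_face_is_facet[OF \<open>finite V\<close>])
  then have "f_vec (independence_complex (whisker_verts V) (whisker_edge V E)) (card V - 1)
      \<le> card (whisker_facet V ` independence_complex V E)"
    unfolding f_vec_def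
    using \<open>finite V\<close> by (intro card_mono) (simp_all add: finite_independence_complex)
  also have "\<dots> \<le> card (independence_complex V E)"
    using \<open>finite V\<close> by (intro card_image_le) (simp add: finite_independence_complex)
  finally show ?thesis .
qed

lemma whisker_facet_remove_Inr_inject:
  assumes eq: "whisker_facet V T - {Inr i} = whisker_facet V T' - {Inr i'}"
    and "i \<in> V" "i \<notin> T" "i' \<notin> T'"
  shows "i = i' \<and> T = T'"
proof -
  have "T = T'"
    using eq unfolding whisker_facet_def by (auto simp: set_eq_iff)
  moreover have "i = i'"
  proof (rule ccontr)
    assume "i \<noteq> i'"
    then have "Inr i \<in> whisker_facet V T' - {Inr i'}"
      using assms \<open>T = T'\<close> unfolding whisker_facet_def by auto
    then have "Inr i \<in> whisker_facet V T - {Inr i}"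
      using eq by simp
    then show False
      by simp
  qed
  ultimately show ?thesis
    by simp
qed

lemma whisker_facet_remove_Inr_face:
  assumes "finite V" "i \<in> V" "T \<in> independence_complex V E" "i \<notin> T"
  shows "whisker_facet V T - {Inr i}
      \<in> {F \<in> independence_complex (whisker_verts V) (whisker_edge V E). card F = card V - 1}"
proof -
  have "T \<subseteq> V"
    using assms(3) unfolding independence_complex_def by blast
  have "Inr i \<in> whisker_facet V T"
    using assms unfolding whisker_facet_def by blast
  then show ?thesis
    using independence_complex_subset_closed[OF whisker_facet_in_independence_complex[OF assms(3)]]
      card_whisker_facet[OF \<open>finite V\<close> \<open>T \<subseteq> V\<close>] \<open>finite V\<close>
    by (simp add: whisker_facet_def card_Diff_singleton_if)
qed

lemma card_independence_complex_le_whisker_subfacets: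
  assumes "finite V" "u \<in> V" "v \<in> V" "u \<noteq> v"
  shows "card (independence_complex V E)
       \<le> f_vec (independence_complex (whisker_verts V) (whisker_edge V E)) (card V - 2)"
proof -
  let ?I = "independence_complex V E"
  let ?B = "{F \<in> independence_complex (whisker_verts V) (whisker_edge V E). card F = card V - 1}"
  define idx where "idx S = (if u \<notin> S then u else v)" for S
  define core where "core S = (if u \<in> S \<and> v \<in> S then S - {u, v} else S)" for S
  define \<psi> where "\<psi> S = whisker_facet V (core S) - {Inr (idx S)}" for S
  have idx: "idx S \<in> V" "idx S \<notin> core S" for S
    using assms unfolding idx_def core_def by auto
  \<comment> \<open>When \<open>idx S = v\<close>, whether \<open>u \<in> core S\<close> tells if both \<open>u\<close> and \<open>v\<close> were removed.\<close>
  have recover: "S = (if idx S = u \<or> u \<in> core S then core S else insert u (insert v (core S)))" for S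
    using assms unfolding idx_def core_def by (cases "u \<in> S"; cases "v \<in> S") auto
  have "\<psi> S \<in> ?B" if "S \<in> ?I" for S
  proof -
    have "core S \<in> ?I"
      unfolding core_def using that independence_complex_subset_closed[OF that Diff_subset] by simp
    then show ?thesis
      unfolding \<psi>_def by (rule whisker_facet_remove_Inr_face[OF \<open>finite V\<close> idx(1) _ idx(2)])
  qed
  then have maps_to: "\<psi> ` ?I \<subseteq> ?B"
    by blast
  have inj: "inj_on \<psi> ?I"
  proof
    fix S S' assume "\<psi> S = \<psi> S'"
    then have "idx S = idx S'" "core S = core S'"
      using whisker_facet_remove_Inr_inject[OF _ idx(1) idx(2) idx(2)] unfolding \<psi>_def by blast+
    then show "S = S'"
      by (subst (1 2) recover) simp
  qed
  have "card {u, v} \<le> card V"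
    using assms by (intro card_mono) auto
  then have "card V - 2 + 1 = card V - 1"
    using \<open>u \<noteq> v\<close> by simp
  moreover have "finite ?B"
    using \<open>finite V\<close> by (simp add: whisker_verts_def finite_independence_complex)
  ultimately show ?thesis
    unfolding f_vec_def using card_inj_on_le[OF inj maps_to] by simp
qed

theorem mainTheorem2:
  fixes V :: "'a set" and E :: "'a \<Rightarrow> 'a \<Rightarrow> bool" and n :: nat
  assumes "simple_graph V E"
    and "card V = n"
    and "n \<ge> 2"
  shows "f_vec (independence_complex (whisker_verts V) (whisker_edge V E)) (n - 2)
       \<ge> f_vec (independence_complex (whisker_verts V) (whisker_edge V E)) (n - 1)"
proof -
  have "finite V"
    using assms(1) unfolding simple_graph_def by blast
  obtain u v where "u \<in> V" "v \<in> V" "u \<noteq> v"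
    using card_le_Suc0_iff_eq[OF \<open>finite V\<close>] assms(2,3) by auto
  then have "V \<noteq> {}"
    by blast
  show ?thesis
    using card_whisker_top_faces_le[OF \<open>finite V\<close> \<open>V \<noteq> {}\<close>, of E]
      card_independence_complex_le_whisker_subfacets[OF \<open>finite V\<close> \<open>u \<in> V\<close> \<open>v \<in> V\<close> \<open>u \<noteq> v\<close>, of E]
      assms(2)
    by simp
qed

end
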